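(* Let $W$ be a cocompact discrete reflection group of a CAT(0) space $X$, let $C$ be a chamber, and let $S$ be a minimal subset of the set $R$ of reflections in $W$ such that $C=\bigcap_{s\in S}X_s^+$. Let $w\in W$, let $w=s_1\cdots s_l$ be a reduced representation ($s_i\in S$, $l=\ell(w)$), and let $T=\{s_1,\dots,s_l\}$. Then $$\overline{C}\cap w\overline{C}=\bigcap_{t\in T}(F_t\cap\overline{C})=\bigcap_{t\in T}(t\overline{C}\cap\overline{C})=\bigcap_{v\in W_T}v\overline{C}.$$
   Context: An isometry $r$ of a geodesic space $X$ is a reflection if $r^2=\mathrm{id}$, the fixed-point set $F_r$ (the wall of $r$) has empty interior, $X\setminus F_r$ has exactly two convex connected components, and $r$ interchanges them. A reflection group is an isometry group generated by reflections. Let $W$ be a reflection group of $X$ acting properly (i.e. $\{\gamma\in W: \gamma x\in B(x,N)\}$ is finite for all $x\in X$, $N>0$), and $R$ the set of all reflections of $X$ lying in $W$. A chamber is a connected component $C$ of $X\setminus\bigcup_{r\in R}F_r$. $W$ is a cocompact discrete reflection group if $\overline{C}$ is compact and $\{\gamma\in W: \gamma C=C\}=\{1\}$. For $r\in R$, $X_r^+$ denotes the component of $X\setminus F_r$ containing $C$. $S\subset R$ is minimal with $C=\bigcap_{s\in S}X_s^+$; then $(W,S)$ is a Coxeter system, and $\ell$ is word length with respect to $S$. For $T\subset S$, $W_T$ is the subgroup generated by $T$. *)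

theory Defs
  imports "HOL-Analysis.Analysis"
begin

text \<open>The space X is the whole type 'a with its metric.\<close>

definition geodesic_seg :: "(real \<Rightarrow> 'a::metric_space) \<Rightarrow> 'a \<Rightarrow> 'a \<Rightarrow> bool" where
  "geodesic_seg g x y \<longleftrightarrow> g 0 = x \<and> g (dist x y) = y \<and>
     (\<forall>s\<in>{0..dist x y}. \<forall>t\<in>{0..dist x y}. dist (g s) (g t) = \<bar>s - t\<bar>)"

definition geodesic_space :: "'a::metric_space itself \<Rightarrow> bool" where
  "geodesic_space TYPE('a) \<longleftrightarrow> (\<forall>x y::'a. \<exists>g. geodesic_seg g x y)"

text \<open>Comparison point on the Euclidean segment from p' to q' at distance s from p'
  (the Euclidean plane is modelled by complex).\<close>
definition cmp_pt :: "complex \<Rightarrow> complex \<Rightarrow> real \<Rightarrow> complex" where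
  "cmp_pt p' q' s = p' + of_real (s / dist p' q') * (q' - p')"

text \<open>Pairs (point on the geodesic triangle, its comparison point).\<close>
definition tri_pairs ::
  "'a::metric_space \<Rightarrow> 'a \<Rightarrow> 'a \<Rightarrow> (real \<Rightarrow> 'a) \<Rightarrow> (real \<Rightarrow> 'a) \<Rightarrow> (real \<Rightarrow> 'a)
   \<Rightarrow> complex \<Rightarrow> complex \<Rightarrow> complex \<Rightarrow> ('a \<times> complex) set" where
  "tri_pairs p q r g1 g2 g3 p' q' r' =
     (\<lambda>s. (g1 s, cmp_pt p' q' s)) ` {0..dist p q} \<union>
     (\<lambda>s. (g2 s, cmp_pt q' r' s)) ` {0..dist q r} \<union>
     (\<lambda>s. (g3 s, cmp_pt r' p' s)) ` {0..dist r p}"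

definition CAT0 :: "'a::metric_space itself \<Rightarrow> bool" where
  "CAT0 TYPE('a) \<longleftrightarrow> geodesic_space TYPE('a) \<and>
    (\<forall>(p::'a) q r g1 g2 g3 p' q' r'.
       geodesic_seg g1 p q \<and> geodesic_seg g2 q r \<and> geodesic_seg g3 r p \<and>
       dist p' q' = dist p q \<and> dist q' r' = dist q r \<and> dist r' p' = dist r p \<longrightarrow>
       (\<forall>(x, x')\<in>tri_pairs p q r g1 g2 g3 p' q' r'.
        \<forall>(y, y')\<in>tri_pairs p q r g1 g2 g3 p' q' r'. dist x y \<le> dist x' y'))"

definition gconvex :: "'a::metric_space set \<Rightarrow> bool" where
  "gconvex A \<longleftrightarrow> (\<forall>x\<in>A. \<forall>y\<in>A. \<forall>g. geodesic_seg g x y \<longrightarrow> g ` {0..dist x y} \<subseteq> A)"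

definition isometry :: "('a::metric_space \<Rightarrow> 'a) \<Rightarrow> bool" where
  "isometry f \<longleftrightarrow> bij f \<and> (\<forall>x y. dist (f x) (f y) = dist x y)"

definition fixset :: "('a \<Rightarrow> 'a) \<Rightarrow> 'a set" where
  "fixset r = {x. r x = x}"

definition reflection :: "('a::metric_space \<Rightarrow> 'a) \<Rightarrow> bool" where
  "reflection r \<longleftrightarrow> isometry r \<and> r \<circ> r = id \<and> interior (fixset r) = {} \<and>
     (\<exists>A B. components (- fixset r) = {A, B} \<and> A \<noteq> B \<and> gconvex A \<and> gconvex B \<and>
            r ` A = B \<and> r ` B = A)"

inductive_set gen_group :: "('a \<Rightarrow> 'a) set \<Rightarrow> ('a \<Rightarrow> 'a) set" for G where
  gen_id: "id \<in> gen_group G"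
| gen_mult: "g \<in> G \<Longrightarrow> w \<in> gen_group G \<Longrightarrow> g \<circ> w \<in> gen_group G"
| gen_inv: "g \<in> G \<Longrightarrow> w \<in> gen_group G \<Longrightarrow> inv g \<circ> w \<in> gen_group G"

definition reflection_group :: "('a::metric_space \<Rightarrow> 'a) set \<Rightarrow> bool" where
  "reflection_group W \<longleftrightarrow> (\<exists>G. (\<forall>g\<in>G. reflection g) \<and> W = gen_group G)"

definition acts_properly :: "('a::metric_space \<Rightarrow> 'a) set \<Rightarrow> bool" where
  "acts_properly W \<longleftrightarrow> (\<forall>x. \<forall>N>0. finite {g\<in>W. g x \<in> ball x N})"

definition refls :: "('a::metric_space \<Rightarrow> 'a) set \<Rightarrow> ('a \<Rightarrow> 'a) set" where
  "refls W = {r\<in>W. reflection r}"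

definition chamber :: "('a::metric_space \<Rightarrow> 'a) set \<Rightarrow> 'a set \<Rightarrow> bool" where
  "chamber W C \<longleftrightarrow> C \<in> components (- (\<Union>r\<in>refls W. fixset r))"

definition cocompact_discrete_refl_group :: "('a::metric_space \<Rightarrow> 'a) set \<Rightarrow> 'a set \<Rightarrow> bool" where
  "cocompact_discrete_refl_group W C \<longleftrightarrow> reflection_group W \<and> acts_properly W \<and> chamber W C \<and>
     compact (closure C) \<and> {g\<in>W. g ` C = C} = {id}"

text \<open>X_r^+ : the component of X - F_r containing C.\<close>
definition halfspace :: "('a::metric_space \<Rightarrow> 'a) \<Rightarrow> 'a set \<Rightarrow> 'a set" where
  "halfspace r C = \<Union>{K\<in>components (- fixset r). C \<subseteq> K}"

definition minimal_gens :: "('a::metric_space \<Rightarrow> 'a) set \<Rightarrow> 'a set \<Rightarrow> ('a \<Rightarrow> 'a) set \<Rightarrow> bool" where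
  "minimal_gens W C S \<longleftrightarrow> S \<subseteq> refls W \<and> C = (\<Inter>s\<in>S. halfspace s C) \<and>
     (\<forall>S'. S' \<subset> S \<longrightarrow> C \<noteq> (\<Inter>s\<in>S'. halfspace s C))"

definition compose_list :: "('a \<Rightarrow> 'a) list \<Rightarrow> 'a \<Rightarrow> 'a" where
  "compose_list ss = foldr (\<circ>) ss id"

definition word_length :: "('a \<Rightarrow> 'a) set \<Rightarrow> ('a \<Rightarrow> 'a) \<Rightarrow> nat" where
  "word_length S w = (LEAST n. \<exists>ss. length ss = n \<and> set ss \<subseteq> S \<and> compose_list ss = w)"

end

theory Submission
  imports Defs
begin

(* The heart of the proof is the exchange condition: if the chamber w C lies beyond the wall
   of a generator s, then s w has a shorter word.  Along a gallery C, g_1 C, ..., w C take the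
   first step g C, g t C that crosses the wall of s; then the reflection r = g^-1 s g separates C
   from t C, and it must be t itself.  Indeed, minimality of S yields a point beyond the wall of
   t but of no other wall of S; the geodesic from C to it leaves the closure of C at a point z of
   the wall of t near which, walls being locally finite, C is a half ball.  Since r separates C
   from t C it fixes z, so t r maps some point of C near z back into C, whence t r = 1.
   For a reduced word w = s_1 ... s_l the chamber w C therefore lies beyond the wall of s_1, so a
   point of closure C and w (closure C) lies in the closures of both halfspaces of s_1, i.e. on
   its wall; then it also lies in s_2 ... s_l (closure C), and induction applies.  The remaining
   equalities are formal, because the closure of C meets t (closure C) exactly in the wall of t. *)

section \<open>Isometries\<close>

lemma isometry_bij: "isometry f \<Longrightarrow> bij f"
  unfolding isometry_def by blast

lemma isometry_dist: "isometry f \<Longrightarrow> dist (f x) (f y) = dist x y"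
  unfolding isometry_def by blast

lemma isometry_inv_f_f: "isometry f \<Longrightarrow> inv f (f x) = x"
  by (simp add: isometry_bij bij_is_inj)

lemma isometry_f_inv_f: "isometry f \<Longrightarrow> f (inv f x) = x"
  by (simp add: isometry_bij bij_is_surj surj_f_inv_f)

lemma isometry_continuous_on: "isometry f \<Longrightarrow> continuous_on A f"
  unfolding continuous_on_iff by (metis isometry_dist)

lemma isometry_continuous_at: "isometry f \<Longrightarrow> continuous (at x) f"
  using isometry_continuous_on continuous_on_eq_continuous_within by blast

lemma isometry_id: "isometry id"
  unfolding isometry_def by simp

lemma isometry_comp: "isometry f \<Longrightarrow> isometry g \<Longrightarrow> isometry (f \<circ> g)"
  unfolding isometry_def using bij_comp by auto

lemma isometry_inv: "isometry f \<Longrightarrow> isometry (inv f)"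
  unfolding isometry_def by (metis bij_imp_bij_inv bij_is_surj surj_f_inv_f)

lemma closed_fixset: "isometry f \<Longrightarrow> closed (fixset f)"
  unfolding fixset_def by (intro closed_Collect_eq isometry_continuous_on continuous_on_id)

lemma fixset_conj:
  assumes "bij h"
  shows "fixset (h \<circ> r \<circ> inv h) = h ` fixset r"
  using assms unfolding fixset_def by (auto simp: image_iff bij_is_inj) (metis bij_inv_eq_iff)

lemma interior_isometry_image_empty:
  assumes "isometry h" "interior F = {}"
  shows "interior (h ` F) = {}"
  using interior_image_subset[of h F] assms
  by (simp add: isometry_bij bij_is_inj isometry_continuous_at)

lemma components_isometry_image:
  assumes h: "isometry h"
  shows "components (h ` P) = (`) h ` components P"
proof -
  have image_component: "g ` K \<in> components (g ` Q)"
    if g: "isometry g" and K: "K \<in> components Q" for g :: "'a \<Rightarrow> 'a" and K Q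
    unfolding in_components_maximal
  proof (intro conjI allI impI)
    show "g ` K \<noteq> {}" "g ` K \<subseteq> g ` Q"
      using K in_components_nonempty in_components_subset by blast+
    show "connected (g ` K)"
      using K by (intro connected_continuous_image isometry_continuous_on[OF g] in_components_connected)
    fix D assume D: "D \<noteq> {} \<and> g ` K \<subseteq> D \<and> D \<subseteq> g ` Q \<and> connected D"
    have inv_g_image: "inv g ` g ` X = X" for X
      by (simp add: image_comp comp_def isometry_inv_f_f[OF g])
    have K_sub: "K \<subseteq> inv g ` D"
      using image_mono[of "g ` K" D "inv g"] D inv_g_image[of K] by simp
    moreover have "inv g ` D \<subseteq> Q"
      using image_mono[of D "g ` Q" "inv g"] D inv_g_image[of Q] by simp
    moreover have "connected (inv g ` D)"
      using D by (intro connected_continuous_image isometry_continuous_on isometry_inv g) simp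
    moreover have "K \<inter> inv g ` D \<noteq> {}"
      using K_sub in_components_nonempty[OF K] by (simp add: Int_absorb2)
    ultimately have "inv g ` D = K"
      using components_maximal[OF K] by blast
    then have "g ` K = g ` inv g ` D"
      by simp
    also have "\<dots> = D"
      by (simp add: image_comp comp_def isometry_f_inv_f[OF g])
    finally show "D = g ` K"
      by simp
  qed
  have "K \<in> (`) h ` components P" if "K \<in> components (h ` P)" for K
  proof -
    have "inv h ` K \<in> components P"
      using image_component[OF isometry_inv[OF h] that]
      by (simp add: image_comp comp_def isometry_inv_f_f[OF h])
    moreover have "K = h ` inv h ` K"
      by (simp add: image_comp comp_def isometry_f_inv_f[OF h])
    ultimately show ?thesis
      by (rule rev_image_eqI)
  qed
  moreover have "h ` K \<in> components (h ` P)" if "K \<in> components P" for K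
    using image_component[OF h that] .
  ultimately show ?thesis
    by blast
qed

section \<open>Geodesic spaces\<close>

lemma gconvexD: "gconvex A \<Longrightarrow> x \<in> A \<Longrightarrow> y \<in> A \<Longrightarrow> geodesic_seg g x y \<Longrightarrow> g ` {0..dist x y} \<subseteq> A"
  unfolding gconvex_def by blast

lemma gconvex_isometry_image:
  assumes h: "isometry h" and A: "gconvex A"
  shows "gconvex (h ` A)"
  unfolding gconvex_def
proof (intro ballI allI impI)
  fix x y g assume "x \<in> h ` A" "y \<in> h ` A" and g: "geodesic_seg g x y"
  then obtain a b where ab: "a \<in> A" "b \<in> A" "x = h a" "y = h b" by blast
  have dxy: "dist x y = dist a b"
    using ab h by (simp add: isometry_dist)
  have seg: "geodesic_seg (inv h \<circ> g) a b"
    using g ab dxy unfolding geodesic_seg_def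
    by (simp add: isometry_inv_f_f[OF h] isometry_dist[OF isometry_inv[OF h]])
  have "(inv h \<circ> g) ` {0..dist x y} \<subseteq> A"
    using gconvexD[OF A ab(1,2) seg] dxy by simp
  then show "g ` {0..dist x y} \<subseteq> h ` A"
    by (auto simp: image_subset_iff isometry_f_inv_f[OF h] intro!: image_eqI[where x = "inv h _"])
qed

lemma geodesic_seg_ends: "geodesic_seg g x y \<Longrightarrow> g 0 = x \<and> g (dist x y) = y"
  unfolding geodesic_seg_def by blast

lemma geodesic_seg_dist:
  "geodesic_seg g x y \<Longrightarrow> s \<in> {0..dist x y} \<Longrightarrow> t \<in> {0..dist x y} \<Longrightarrow> dist (g s) (g t) = \<bar>s - t\<bar>"
  unfolding geodesic_seg_def by blast

lemma continuous_on_geodesic_seg: "geodesic_seg g x y \<Longrightarrow> continuous_on {0..dist x y} g"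
  unfolding geodesic_seg_def continuous_on_iff by (metis abs_minus_commute dist_real_def)

lemma connected_ball_geodesic:
  fixes z :: "'a::metric_space"
  assumes "geodesic_space TYPE('a)"
  shows "connected (ball z e)"
proof -
  obtain G where G: "\<And>q. geodesic_seg (G q) z q"
    using assms unfolding geodesic_space_def by metis
  have G_dist: "dist z (G q s) = s" if "s \<in> {0..dist z q}" for q s
    using geodesic_seg_dist[OF G, of 0 q s] geodesic_seg_ends[OF G] that by simp
  have G_ball: "G q ` {0..dist z q} \<subseteq> ball z e" if "q \<in> ball z e" for q
    using that G_dist by auto
  have G_ends: "z \<in> G q ` {0..dist z q}" "q \<in> G q ` {0..dist z q}" for q
    using geodesic_seg_ends[OF G, of q] image_eqI[of z "G q" 0] image_eqI[of q "G q" "dist z q"]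
    by auto
  have "ball z e = (\<Union>q\<in>ball z e. G q ` {0..dist z q})"
  proof (rule subset_antisym)
    show "ball z e \<subseteq> (\<Union>q\<in>ball z e. G q ` {0..dist z q})"
    proof
      fix q assume "q \<in> ball z e"
      then show "q \<in> (\<Union>q\<in>ball z e. G q ` {0..dist z q})"
        using G_ends(2)[of q] by (rule UN_I)
    qed
    show "(\<Union>q\<in>ball z e. G q ` {0..dist z q}) \<subseteq> ball z e"
      using G_ball by (rule UN_least)
  qed
  moreover have "connected (\<Union>q\<in>ball z e. G q ` {0..dist z q})"
  proof (rule connected_Union)
    show "connected S" if "S \<in> (\<lambda>q. G q ` {0..dist z q}) ` ball z e" for S
      using that by (auto intro!: connected_continuous_image continuous_on_geodesic_seg G)
    have "z \<in> \<Inter> ((\<lambda>q. G q ` {0..dist z q}) ` ball z e)"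
      using G_ends(1) by simp
    then show "\<Inter> ((\<lambda>q. G q ` {0..dist z q}) ` ball z e) \<noteq> {}"
      by auto
  qed
  ultimately show ?thesis
    by simp
qed

lemma open_components_geodesic:
  fixes K :: "'a::metric_space set"
  assumes "geodesic_space TYPE('a)" "open S" "K \<in> components S"
  shows "open K"
  unfolding open_contains_ball
proof
  fix x assume x: "x \<in> K"
  then obtain e where e: "e > 0" "ball x e \<subseteq> S"
    using assms in_components_subset open_contains_ball by blast
  moreover have "x \<in> K \<inter> ball x e"
    using x e by simp
  ultimately have "ball x e \<subseteq> K"
    using components_maximal[OF assms(3) connected_ball_geodesic[OF assms(1)]] by blast
  then show "\<exists>e>0. ball x e \<subseteq> K"
    using e by blast
qed

section \<open>Reflections\<close>

lemma reflection_isometry: "reflection r \<Longrightarrow> isometry r"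
  unfolding reflection_def by blast

lemma reflection_comp_self: "reflection r \<Longrightarrow> r \<circ> r = id"
  unfolding reflection_def by blast

lemma reflection_involution: "reflection r \<Longrightarrow> r (r x) = x"
  by (simp add: reflection_comp_self pointfree_idE)

lemma interior_fixset_reflection: "reflection r \<Longrightarrow> interior (fixset r) = {}"
  unfolding reflection_def by blast

lemma exists_preimage_off_wall:
  assumes r: "isometry r" and t: "reflection t" and V: "open V" "V \<noteq> {}"
  obtains x where "r x \<in> V" "x \<notin> fixset t"
proof -
  have "open (r -` V)"
    using V(1) by (intro continuous_open_vimage isometry_continuous_at r)
  moreover have "r -` V \<noteq> {}"
    using V(2) isometry_f_inv_f[OF r] by (metis ex_in_conv vimageI2)
  ultimately have "\<not> r -` V \<subseteq> fixset t"
    using interior_maximal interior_fixset_reflection[OF t] by blast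
  then show ?thesis
    using that by blast
qed

lemma reflection_components:
  assumes r: "reflection r" and A: "A \<in> components (- fixset r)"
  shows "components (- fixset r) = {A, r ` A}" "A \<inter> r ` A = {}" "gconvex A"
proof -
  obtain A0 B0 where AB0: "components (- fixset r) = {A0, B0}" "A0 \<noteq> B0" "gconvex A0" "gconvex B0"
    "r ` A0 = B0" "r ` B0 = A0"
    using r unfolding reflection_def by (elim conjE exE) (rule that, assumption+)
  have "components (- fixset r) = {A, r ` A} \<and> A \<noteq> r ` A \<and> gconvex A"
  proof (cases "A = A0")
    case True
    then show ?thesis
      using AB0 by simp
  next
    case False
    then have "A = B0"
      using A AB0(1) by simp
    then show ?thesis
      using AB0 by (simp add: insert_commute)
  qed
  moreover have "r ` A \<in> components (- fixset r)"
    using calculation by simp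
  ultimately show "components (- fixset r) = {A, r ` A}" "A \<inter> r ` A = {}" "gconvex A"
    using components_nonoverlap[OF A] by simp_all
qed

lemma reflection_conj:
  assumes r: "reflection r" and h: "isometry h"
  shows "reflection (h \<circ> r \<circ> inv h)"
proof -
  let ?r = "h \<circ> r \<circ> inv h"
  obtain A where A: "A \<in> components (- fixset r)"
    using r unfolding reflection_def by (elim conjE exE) (metis insertI1 that)
  note AB = reflection_components[OF r A]
  have "isometry ?r"
    by (intro isometry_comp h reflection_isometry[OF r] isometry_inv)
  moreover have "?r \<circ> ?r = id"
    by (simp add: fun_eq_iff isometry_inv_f_f[OF h] isometry_f_inv_f[OF h] reflection_involution[OF r])
  moreover have fix_r: "fixset ?r = h ` fixset r"
    using h by (simp add: isometry_bij fixset_conj)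
  then have "interior (fixset ?r) = {}"
    by (simp add: interior_isometry_image_empty h interior_fixset_reflection r)
  moreover have "components (- fixset ?r) = {h ` A, h ` r ` A}"
    using AB(1) components_isometry_image[OF h, of "- fixset r"] fix_r
    by (simp add: bij_image_Compl_eq isometry_bij h)
  moreover have "A \<noteq> r ` A"
    using AB(2) in_components_nonempty[OF A] by auto
  then have "h ` A \<noteq> h ` r ` A"
    using isometry_bij[OF h] by (simp add: bij_is_inj inj_image_eq_iff)
  moreover have "r ` A \<in> components (- fixset r)"
    using AB(1) by simp
  then have "gconvex (h ` A)" "gconvex (h ` r ` A)"
    using AB(3) reflection_components(3)[OF r] by (simp_all add: gconvex_isometry_image h)
  moreover have "?r ` h ` A = h ` r ` A" "?r ` h ` r ` A = h ` A"
    by (simp_all add: image_comp comp_def isometry_inv_f_f[OF h] reflection_involution[OF r])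
  ultimately show ?thesis
    unfolding reflection_def by blast
qed

section \<open>Generated groups and words\<close>

lemma gen_group_comp: "u \<in> gen_group G \<Longrightarrow> v \<in> gen_group G \<Longrightarrow> u \<circ> v \<in> gen_group G"
  by (induction u rule: gen_group.induct) (auto simp: comp_assoc intro: gen_group.intros)

lemma gen_group_generator: "g \<in> G \<Longrightarrow> g \<in> gen_group G"
  using gen_group.gen_mult[OF _ gen_group.gen_id] by fastforce

lemma gen_group_inv_generator: "g \<in> G \<Longrightarrow> inv g \<in> gen_group G"
  using gen_group.gen_inv[OF _ gen_group.gen_id] by fastforce

lemma bij_gen_group:
  assumes "\<And>g. g \<in> G \<Longrightarrow> bij g" "u \<in> gen_group G"
  shows "bij u"
  using assms(2) by induction (metis bij_id bij_comp bij_imp_bij_inv assms(1))+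

lemma isometry_gen_group:
  assumes "\<And>g. g \<in> G \<Longrightarrow> isometry g" "u \<in> gen_group G"
  shows "isometry u"
  using assms(2) by induction (metis isometry_id isometry_comp isometry_inv assms(1))+

lemma gen_group_inv:
  assumes G: "\<And>g. g \<in> G \<Longrightarrow> bij g" and u: "u \<in> gen_group G"
  shows "inv u \<in> gen_group G"
  using u
proof induction
  case gen_id
  then show ?case
    using gen_group.gen_id by (metis inv_id)
next
  case (gen_mult g w)
  then have inv_comp: "inv (g \<circ> w) = inv w \<circ> inv g"
    by (simp add: o_inv_distrib G bij_gen_group[OF G])
  show ?case
    unfolding inv_comp by (rule gen_group_comp[OF gen_mult.IH gen_group_inv_generator[OF gen_mult.hyps(1)]])
next
  case (gen_inv g w)
  then have inv_comp: "inv (inv g \<circ> w) = inv w \<circ> g"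
    by (simp add: o_inv_distrib G bij_gen_group[OF G] bij_imp_bij_inv inv_inv_eq)
  show ?case
    unfolding inv_comp by (rule gen_group_comp[OF gen_inv.IH gen_group_generator[OF gen_inv.hyps(1)]])
qed

lemma gen_group_fixes:
  assumes G: "\<And>g. g \<in> G \<Longrightarrow> inj g \<and> g x = x" and u: "u \<in> gen_group G"
  shows "u x = x"
  using u
proof induction
  case (gen_inv g w)
  have "inv g x = x"
    using G[OF gen_inv.hyps(1)] by (metis inv_f_f)
  then show ?case
    using gen_inv.IH by simp
qed (simp_all add: G)

lemma nat_crossing:
  assumes "P 0" "\<not> P n"
  obtains i where "i < n" "P i" "\<not> P (Suc i)"
  using assms by (induction n) (auto intro: less_SucI)

lemma compose_list_Nil: "compose_list [] = id"
  by (simp add: compose_list_def)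

lemma compose_list_Cons: "compose_list (s # ss) = s \<circ> compose_list ss"
  by (simp add: compose_list_def)

lemma compose_list_append: "compose_list (xs @ ys) = compose_list xs \<circ> compose_list ys"
  by (induction xs) (simp_all add: compose_list_Nil compose_list_Cons comp_assoc)

lemma compose_list_fixes: "(\<And>t. t \<in> set ss \<Longrightarrow> t x = x) \<Longrightarrow> compose_list ss x = x"
  by (induction ss) (simp_all add: compose_list_Nil compose_list_Cons)

lemma word_length_le: "set ss \<subseteq> S \<Longrightarrow> word_length S (compose_list ss) \<le> length ss"
  unfolding word_length_def by (rule Least_le) blast

lemma reduced_word_tail:
  assumes S: "set (s # ss) \<subseteq> S"
    and reduced: "length (s # ss) = word_length S (compose_list (s # ss))"
  shows "length ss = word_length S (compose_list ss)"
proof -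
  have "\<exists>l. length l = word_length S (compose_list ss) \<and> set l \<subseteq> S \<and> compose_list l = compose_list ss"
    unfolding word_length_def by (rule LeastI_ex) (use S in auto)
  then obtain l where l: "length l = word_length S (compose_list ss)" "set l \<subseteq> S"
    "compose_list l = compose_list ss" by blast
  have "word_length S (compose_list (s # ss)) \<le> length (s # l)"
    using word_length_le[of "s # l" S] S l by (simp add: compose_list_Cons)
  moreover have "word_length S (compose_list ss) \<le> length ss"
    using S by (simp add: word_length_le)
  ultimately show ?thesis
    using reduced l(1) by simp
qed

section \<open>Crossing walls\<close>

lemma first_exit_point:
  fixes \<gamma> :: "real \<Rightarrow> 'a::metric_space"
  assumes \<gamma>: "continuous_on {0..d} \<gamma>" and "0 \<le> d" and F: "closed F"
    and H: "H \<in> components (- F)" and start: "\<gamma> 0 \<in> H" and stop: "\<gamma> d \<notin> H"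
  obtains \<tau> where "0 < \<tau>" "\<tau> \<le> d" "\<gamma> \<tau> \<in> F" "\<gamma> ` {0..<\<tau>} \<subseteq> H"
    "\<gamma> \<tau> \<in> closure (\<gamma> ` {0..<\<tau>})"
proof -
  have H_sub: "H \<subseteq> - F"
    using H by (rule in_components_subset)
  have stays_in_H: "\<gamma> ` I \<subseteq> H" if "I \<subseteq> {0..d}" "is_interval I" "0 \<in> I" "\<gamma> ` I \<subseteq> - F" for I
  proof -
    have "connected (\<gamma> ` I)"
      using that by (intro connected_continuous_image continuous_on_subset[OF \<gamma>])
        (simp_all add: is_interval_connected)
    moreover have "\<gamma> 0 \<in> H \<inter> \<gamma> ` I"
      using start that(3) by simp
    ultimately show ?thesis
      using components_maximal[OF H _ that(4)] by blast
  qed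
  define Z where "Z = {0..d} \<inter> \<gamma> -` F"
  have "closed Z"
    unfolding Z_def using \<gamma> F by (intro continuous_closed_preimage) simp_all
  have "Z \<noteq> {}"
  proof
    assume "Z = {}"
    then have "\<gamma> ` {0..d} \<subseteq> - F"
      unfolding Z_def by blast
    then have "\<gamma> ` {0..d} \<subseteq> H"
      using stays_in_H \<open>0 \<le> d\<close> by (simp add: is_interval_cc)
    then show False
      using stop \<open>0 \<le> d\<close> by (auto simp: image_subset_iff)
  qed
  define \<tau> where "\<tau> = Inf Z"
  have "bdd_below Z"
    unfolding Z_def by (rule bdd_belowI[of _ 0]) simp
  then have "\<tau> \<in> Z"
    unfolding \<tau>_def using closed_contains_Inf \<open>Z \<noteq> {}\<close> \<open>closed Z\<close> by blast
  then have \<tau>: "0 \<le> \<tau>" "\<tau> \<le> d" "\<gamma> \<tau> \<in> F"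
    unfolding Z_def by simp_all
  have "\<gamma> a \<notin> F" if "a \<in> {0..<\<tau>}" for a
    using that cInf_lower[OF _ \<open>bdd_below Z\<close>, of a] \<tau>(2) unfolding \<tau>_def Z_def by force
  then have "\<gamma> ` {0..<\<tau>} \<subseteq> H"
    using stays_in_H[of "{0..<\<tau>}"] \<tau> start H_sub by (fastforce simp: is_interval_ic)
  moreover have "0 < \<tau>"
    using \<tau> start H_sub by (metis ComplD le_less subsetD)
  moreover have "continuous_on (closure {0..<\<tau>}) \<gamma>"
    using \<open>0 < \<tau>\<close> \<tau>(2) by (simp add: continuous_on_subset[OF \<gamma>])
  then have "\<gamma> ` closure {0..<\<tau>} \<subseteq> closure (\<gamma> ` {0..<\<tau>})"
    by (rule image_closure_subset) (simp_all add: closure_subset)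
  ultimately show ?thesis
    using that \<tau> by (simp add: image_subset_iff)
qed

definition separates :: "('a::metric_space \<Rightarrow> 'a) \<Rightarrow> 'a set \<Rightarrow> 'a set \<Rightarrow> bool" where
  "separates r X Y \<longleftrightarrow> (\<exists>A B. A \<in> components (- fixset r) \<and> B \<in> components (- fixset r) \<and>
     A \<noteq> B \<and> X \<subseteq> A \<and> Y \<subseteq> B)"

lemma separates_conj:
  assumes h: "isometry h" and sep: "separates r X Y"
  shows "separates (h \<circ> r \<circ> inv h) (h ` X) (h ` Y)"
proof -
  obtain A B where AB: "A \<in> components (- fixset r)" "B \<in> components (- fixset r)" "A \<noteq> B"
    "X \<subseteq> A" "Y \<subseteq> B"
    using sep unfolding separates_def by blast
  have "- fixset (h \<circ> r \<circ> inv h) = h ` (- fixset r)"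
    using isometry_bij[OF h] by (simp add: fixset_conj bij_image_Compl_eq)
  then have "components (- fixset (h \<circ> r \<circ> inv h)) = (`) h ` components (- fixset r)"
    using components_isometry_image[OF h, of "- fixset r"] by simp
  moreover have "h ` A \<noteq> h ` B"
    using AB(3) isometry_bij[OF h] by (simp add: bij_is_inj inj_image_eq_iff)
  moreover have "h ` X \<subseteq> h ` A" "h ` Y \<subseteq> h ` B"
    using AB(4,5) by (simp_all add: image_mono)
  ultimately show ?thesis
    unfolding separates_def using AB(1,2) by blast
qed

lemma fixed_point_on_separating_wall:
  fixes z :: "'a::metric_space"
  assumes geo: "geodesic_space TYPE('a)" and r: "isometry r" and t: "isometry t"
    and sep: "separates r C (t ` C)" and "t z = z" and "z \<in> closure C"
  shows "r z = z"
proof (rule ccontr)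
  assume "r z \<noteq> z"
  obtain A B where AB: "A \<in> components (- fixset r)" "B \<in> components (- fixset r)" "A \<noteq> B"
    "C \<subseteq> A" "t ` C \<subseteq> B"
    using sep unfolding separates_def by blast
  have "open (- fixset r)"
    using closed_fixset[OF r] by (simp add: open_Compl)
  moreover have "z \<in> - fixset r"
    using \<open>r z \<noteq> z\<close> by (simp add: fixset_def)
  ultimately obtain e where "e > 0" and ball_e: "ball z e \<subseteq> - fixset r"
    using open_contains_ball by blast
  then obtain p where p: "p \<in> C" "dist p z < e"
    using \<open>z \<in> closure C\<close> closure_approachable by blast
  have "A \<inter> ball z e \<noteq> {}"
    using p AB(4) by (auto simp: dist_commute)
  then have "ball z e \<subseteq> A"
    using components_maximal[OF AB(1) connected_ball_geodesic[OF geo] ball_e] by blast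
  moreover have "dist z (t p) = dist z p"
    using isometry_dist[OF t, of z p] \<open>t z = z\<close> by simp
  then have "t p \<in> ball z e"
    using p by (simp add: dist_commute)
  moreover have "t p \<in> B"
    using AB(5) p(1) by blast
  ultimately show False
    using components_nonoverlap[OF AB(1,2)] AB(3) by blast
qed

lemma halfspace_eq_component:
  assumes K: "K \<in> components (- fixset r)" and "C \<subseteq> K" "C \<noteq> {}"
  shows "halfspace r C = K"
proof -
  have "K' = K" if "K' \<in> components (- fixset r)" "C \<subseteq> K'" for K'
    using components_eq[OF that(1) K] that(2) assms(2,3) by blast
  then have "{K' \<in> components (- fixset r). C \<subseteq> K'} = {K}"
    using K assms(2) by blast
  then show ?thesis
    unfolding halfspace_def by simp
qed

section \<open>Chambers of a discrete reflection group\<close>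

locale discrete_reflection_group =
  fixes W :: "('a::metric_space \<Rightarrow> 'a) set" and C :: "'a set" and S :: "('a \<Rightarrow> 'a) set"
  assumes geodesic: "geodesic_space TYPE('a)"
    and cocompact: "cocompact_discrete_refl_group W C"
    and minimal: "minimal_gens W C S"
begin

lemma W_generated:
  obtains G where "\<And>g. g \<in> G \<Longrightarrow> reflection g" "W = gen_group G"
  using cocompact unfolding cocompact_discrete_refl_group_def reflection_group_def by blast

lemma isometry_W: "g \<in> W \<Longrightarrow> isometry g"
proof -
  obtain G where G: "\<And>g. g \<in> G \<Longrightarrow> reflection g" "W = gen_group G"
    using W_generated by metis
  show "g \<in> W \<Longrightarrow> isometry g"
    unfolding G(2) by (rule isometry_gen_group[OF reflection_isometry[OF G(1)]])
qed

lemma comp_W: "u \<in> W \<Longrightarrow> v \<in> W \<Longrightarrow> u \<circ> v \<in> W"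
proof -
  obtain G where "W = gen_group G"
    using W_generated by metis
  then show "u \<in> W \<Longrightarrow> v \<in> W \<Longrightarrow> u \<circ> v \<in> W"
    by (simp add: gen_group_comp)
qed

lemma inv_W: "u \<in> W \<Longrightarrow> inv u \<in> W"
proof -
  obtain G where G: "\<And>g. g \<in> G \<Longrightarrow> reflection g" "W = gen_group G"
    using W_generated by metis
  show "u \<in> W \<Longrightarrow> inv u \<in> W"
    unfolding G(2) by (rule gen_group_inv[OF isometry_bij[OF reflection_isometry[OF G(1)]]])
qed

lemma id_W: "id \<in> W"
proof -
  obtain G where "W = gen_group G"
    using W_generated by metis
  then show ?thesis
    by (simp add: gen_group.gen_id)
qed

lemma S_subset_refls: "S \<subseteq> refls W"
  using minimal unfolding minimal_gens_def by (elim conjE)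

lemma S_refls: "s \<in> S \<Longrightarrow> s \<in> refls W"
  using S_subset_refls by blast

lemma refls_conj:
  assumes r: "r \<in> refls W" and g: "g \<in> W"
  shows "inv g \<circ> r \<circ> g \<in> refls W"
proof -
  have "inv (inv g) = g"
    using isometry_bij[OF isometry_W[OF g]] by (simp add: inv_inv_eq)
  then have "reflection (inv g \<circ> r \<circ> g)"
    using reflection_conj[of r "inv g"] r isometry_W[OF inv_W[OF g]] by (simp add: refls_def)
  moreover have "inv g \<circ> r \<circ> g \<in> W"
    using r g by (simp add: refls_def comp_W inv_W)
  ultimately show ?thesis
    by (simp add: refls_def)
qed

lemma compose_list_W: "set ss \<subseteq> S \<Longrightarrow> compose_list ss \<in> W"
  using S_subset_refls
  by (induction ss) (auto simp: compose_list_Nil compose_list_Cons refls_def intro: id_W comp_W)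

lemma chamber_component: "C \<in> components (- (\<Union>r\<in>refls W. fixset r))"
  using cocompact unfolding cocompact_discrete_refl_group_def chamber_def by blast

lemma chamber_nonempty: "C \<noteq> {}"
  using chamber_component by (rule in_components_nonempty)

lemma chamber_avoids_walls: "r \<in> refls W \<Longrightarrow> C \<inter> fixset r = {}"
  using in_components_subset[OF chamber_component] by blast

lemma chamber_eq: "C = (\<Inter>s\<in>S. halfspace s C)"
  using minimal unfolding minimal_gens_def by (elim conjE)

lemma chamber_neq_smaller_Inter: "S' \<subset> S \<Longrightarrow> C \<noteq> (\<Inter>s\<in>S'. halfspace s C)"
proof -
  have "\<forall>S'. S' \<subset> S \<longrightarrow> C \<noteq> (\<Inter>s\<in>S'. halfspace s C)"
    using minimal unfolding minimal_gens_def by (elim conjE)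
  then show "S' \<subset> S \<Longrightarrow> C \<noteq> (\<Inter>s\<in>S'. halfspace s C)"
    by blast
qed

lemma subset_chamberI: "(\<And>s. s \<in> S \<Longrightarrow> X \<subseteq> halfspace s C) \<Longrightarrow> X \<subseteq> C"
  by (subst chamber_eq) (rule INT_greatest)

lemma W_image_chamber_avoids_walls:
  assumes g: "g \<in> W" and r: "r \<in> refls W"
  shows "g ` C \<inter> fixset r = {}"
proof -
  have "r (g q) \<noteq> g q" if "q \<in> C" for q
  proof
    assume "r (g q) = g q"
    then have "(inv g \<circ> r \<circ> g) q = q"
      by (simp add: isometry_inv_f_f[OF isometry_W[OF g]])
    then show False
      using chamber_avoids_walls[OF refls_conj[OF r g]] that by (auto simp: fixset_def)
  qed
  then show ?thesis
    by (auto simp: fixset_def)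
qed

lemma W_chamber_point_eq_id:
  assumes g: "g \<in> W" and q: "q \<in> C" "g q \<in> C"
  shows "g = id"
proof -
  have image_in_chamber: "h ` C \<subseteq> C" if h: "h \<in> W" "h p \<in> C" "p \<in> C" for h p
  proof (rule components_maximal[OF chamber_component])
    show "connected (h ` C)"
      by (intro connected_continuous_image isometry_continuous_on isometry_W h
          in_components_connected[OF chamber_component])
    show "h ` C \<subseteq> - (\<Union>r\<in>refls W. fixset r)"
      using W_image_chamber_avoids_walls[OF h(1)] by blast
    show "C \<inter> h ` C \<noteq> {}"
      using h by blast
  qed
  have "inv g (g q) \<in> C"
    using q by (simp add: isometry_inv_f_f[OF isometry_W[OF g]])
  then have "inv g ` C \<subseteq> C"
    using image_in_chamber[OF inv_W[OF g]] q by blast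
  then have "g ` inv g ` C \<subseteq> g ` C"
    by (rule image_mono)
  then have "C \<subseteq> g ` C"
    by (simp add: image_comp comp_def isometry_f_inv_f[OF isometry_W[OF g]])
  moreover have "g ` C \<subseteq> C"
    using image_in_chamber[OF g q(2,1)] .
  ultimately have "g \<in> {g \<in> W. g ` C = C}"
    using g by blast
  then show ?thesis
    using cocompact unfolding cocompact_discrete_refl_group_def by simp
qed

lemma halfspace_component:
  assumes r: "r \<in> refls W"
  shows "halfspace r C \<in> components (- fixset r)" "C \<subseteq> halfspace r C"
proof -
  have "C \<subseteq> - fixset r"
    using chamber_avoids_walls[OF r] by blast
  moreover have "- fixset r \<noteq> {}"
    using calculation chamber_nonempty by blast
  ultimately obtain K where K: "K \<in> components (- fixset r)" "C \<subseteq> K"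
    using exists_component_superset in_components_connected[OF chamber_component] by blast
  then show "halfspace r C \<in> components (- fixset r)" "C \<subseteq> halfspace r C"
    using halfspace_eq_component[OF K chamber_nonempty] by simp_all
qed

lemma halfspaces:
  assumes r: "r \<in> refls W"
  shows "components (- fixset r) = {halfspace r C, r ` halfspace r C}"
    and "halfspace r C \<inter> r ` halfspace r C = {}"
    and "halfspace r C \<union> r ` halfspace r C = - fixset r"
    and "gconvex (halfspace r C)"
    and "open (halfspace r C)" "open (r ` halfspace r C)"
proof -
  have refl: "reflection r"
    using r by (simp add: refls_def)
  note H = reflection_components[OF refl halfspace_component(1)[OF r]]
  show "components (- fixset r) = {halfspace r C, r ` halfspace r C}"
    "halfspace r C \<inter> r ` halfspace r C = {}" "gconvex (halfspace r C)"
    by (fact H)+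
  show "halfspace r C \<union> r ` halfspace r C = - fixset r"
    using Union_components[of "- fixset r"] H(1) by simp
  have "open (- fixset r)"
    using closed_fixset[OF reflection_isometry[OF refl]] by (simp add: open_Compl)
  then show "open (halfspace r C)" "open (r ` halfspace r C)"
    using H(1) open_components_geodesic[OF geodesic] by simp_all
qed

lemma chamber_side:
  assumes v: "v \<in> W" and r: "r \<in> refls W"
  shows "v ` C \<subseteq> halfspace r C \<or> v ` C \<subseteq> r ` halfspace r C"
proof -
  have sub: "v ` C \<subseteq> - fixset r"
    using W_image_chamber_avoids_walls[OF v r] by blast
  moreover have "- fixset r \<noteq> {}"
    using sub chamber_nonempty by blast
  moreover have "connected (v ` C)"
    by (intro connected_continuous_image isometry_continuous_on isometry_W v
        in_components_connected[OF chamber_component])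
  ultimately obtain K where "K \<in> components (- fixset r)" "v ` C \<subseteq> K"
    using exists_component_superset by blast
  then show ?thesis
    using halfspaces(1)[OF r] by auto
qed

lemma closure_halfspaces_subset_wall:
  assumes r: "r \<in> refls W"
  shows "closure (halfspace r C) \<inter> closure (r ` halfspace r C) \<subseteq> fixset r"
proof
  fix x assume x: "x \<in> closure (halfspace r C) \<inter> closure (r ` halfspace r C)"
  show "x \<in> fixset r"
  proof (rule ccontr)
    assume "x \<notin> fixset r"
    then have "x \<in> halfspace r C \<or> x \<in> r ` halfspace r C"
      using halfspaces(3)[OF r] by blast
    moreover have "closure (halfspace r C) \<inter> r ` halfspace r C = {}"
      using open_Int_closure_eq_empty[OF halfspaces(6)[OF r]] halfspaces(2)[OF r]
      by (simp add: Int_commute)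
    moreover have "halfspace r C \<inter> closure (r ` halfspace r C) = {}"
      using open_Int_closure_eq_empty[OF halfspaces(5)[OF r]] halfspaces(2)[OF r] by simp
    ultimately show False
      using x by blast
  qed
qed

lemma exists_ball_avoiding_walls:
  assumes R: "R \<subseteq> W" and z: "\<And>s. s \<in> R \<Longrightarrow> s z \<noteq> z"
  obtains e where "e > 0" "\<And>s. s \<in> R \<Longrightarrow> ball z e \<inter> fixset s = {}"
proof -
  define N where "N = {s \<in> R. fixset s \<inter> ball z 1 \<noteq> {}}"
  have "N \<subseteq> {g \<in> W. g z \<in> ball z 2}"
  proof
    fix s assume "s \<in> N"
    then obtain q where s: "s \<in> R" "s q = q" "dist z q < 1"
      unfolding N_def fixset_def by auto
    have "dist q (s z) = dist (s q) (s z)"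
      using s(2) by simp
    also have "\<dots> = dist z q"
      using isometry_W R s(1) by (auto simp: isometry_dist dist_commute)
    finally have "dist z (s z) < 2"
      using dist_triangle[of z "s z" q] s(3) by simp
    then show "s \<in> {g \<in> W. g z \<in> ball z 2}"
      using R s(1) by auto
  qed
  moreover have "finite {g \<in> W. g z \<in> ball z 2}"
    using cocompact unfolding cocompact_discrete_refl_group_def acts_properly_def by simp
  ultimately have "finite N"
    by (rule finite_subset)
  then have "open (\<Inter>s\<in>N. - fixset s)"
    using R isometry_W closed_fixset unfolding N_def by (auto intro!: open_INT simp: open_Compl)
  moreover have "z \<in> (\<Inter>s\<in>N. - fixset s)"
    using z unfolding N_def fixset_def by auto
  ultimately obtain e where "e > 0" and e: "ball z e \<subseteq> (\<Inter>s\<in>N. - fixset s)"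
    using open_contains_ball by blast
  show ?thesis
  proof (rule that)
    show "min e 1 > 0"
      using \<open>e > 0\<close> by simp
    fix s assume "s \<in> R"
    show "ball z (min e 1) \<inter> fixset s = {}"
    proof (cases "s \<in> N")
      case True
      then show ?thesis
        using e by auto
    next
      case False
      then show ?thesis
        using \<open>s \<in> R\<close> unfolding N_def by auto
    qed
  qed
qed

lemma point_beyond_single_wall:
  assumes t: "t \<in> S"
  obtains y where "\<And>s. s \<in> S - {t} \<Longrightarrow> y \<in> halfspace s C" "y \<notin> halfspace t C"
proof -
  have "C \<noteq> (\<Inter>s\<in>S - {t}. halfspace s C)"
    using t by (intro chamber_neq_smaller_Inter) blast
  moreover have "C \<subseteq> (\<Inter>s\<in>S - {t}. halfspace s C)"
    using halfspace_component(2) S_refls by blast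
  ultimately obtain y where y: "\<And>s. s \<in> S - {t} \<Longrightarrow> y \<in> halfspace s C" "y \<notin> C"
    by blast
  have "y \<notin> halfspace t C"
  proof
    assume "y \<in> halfspace t C"
    then have "{y} \<subseteq> halfspace s C" if "s \<in> S" for s
      using y(1)[of s] that by (cases "s = t") auto
    then show False
      using subset_chamberI[of "{y}"] y(2) by blast
  qed
  then show ?thesis
    using that y(1) by blast
qed

lemma panel_point:
  assumes t: "t \<in> S"
  obtains z where "t z = z" "z \<in> closure C" "\<And>s. s \<in> S - {t} \<Longrightarrow> z \<in> halfspace s C"
proof -
  obtain y where y: "\<And>s. s \<in> S - {t} \<Longrightarrow> y \<in> halfspace s C" and y_t: "y \<notin> halfspace t C"
    using point_beyond_single_wall[OF t] by blast
  obtain c where c: "c \<in> C"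
    using chamber_nonempty by blast
  obtain \<gamma> where \<gamma>: "geodesic_seg \<gamma> c y"
    using geodesic unfolding geodesic_space_def by blast
  have seg: "\<gamma> ` {0..dist c y} \<subseteq> halfspace s C" if s: "s \<in> S - {t}" for s
  proof -
    have "c \<in> halfspace s C"
      using halfspace_component(2)[OF S_refls] c s by blast
    then show ?thesis
      using gconvexD[OF halfspaces(4)[OF S_refls] _ y(1)[OF s] \<gamma>] s by blast
  qed
  have t_refls: "t \<in> refls W"
    using S_refls t .
  note t_half = halfspace_component[OF t_refls]
  have "closed (fixset t)"
    using t_refls by (simp add: refls_def closed_fixset reflection_isometry)
  moreover have "\<gamma> 0 \<in> halfspace t C" "\<gamma> (dist c y) \<notin> halfspace t C"
    using geodesic_seg_ends[OF \<gamma>] c t_half(2) y_t by auto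
  ultimately obtain \<tau> where \<tau>: "0 < \<tau>" "\<tau> \<le> dist c y" "\<gamma> \<tau> \<in> fixset t"
    "\<gamma> ` {0..<\<tau>} \<subseteq> halfspace t C" "\<gamma> \<tau> \<in> closure (\<gamma> ` {0..<\<tau>})"
    using first_exit_point[OF continuous_on_geodesic_seg[OF \<gamma>] zero_le_dist] t_half by blast
  have "\<gamma> ` {0..<\<tau>} \<subseteq> halfspace s C" if "s \<in> S" for s
  proof (cases "s = t")
    case True
    then show ?thesis
      using \<tau>(4) by simp
  next
    case False
    then have "\<gamma> ` {0..<\<tau>} \<subseteq> \<gamma> ` {0..dist c y}"
      using \<tau>(2) by (intro image_mono) auto
    then show ?thesis
      using seg[of s] that False by blast
  qed
  then have "\<gamma> ` {0..<\<tau>} \<subseteq> C"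
    by (rule subset_chamberI)
  then have "\<gamma> \<tau> \<in> closure C"
    using \<tau>(5) closure_mono by blast
  moreover have "\<gamma> \<tau> \<in> halfspace s C" if "s \<in> S - {t}" for s
    using seg[OF that] \<tau>(1,2) by (simp add: image_subset_iff)
  ultimately show ?thesis
    using that \<tau>(3) by (simp add: fixset_def)
qed

lemma chamber_near_panel_point:
  assumes t: "t \<in> S" and z: "\<And>s. s \<in> S - {t} \<Longrightarrow> z \<in> halfspace s C"
  obtains e where "e > 0" "ball z e \<inter> halfspace t C \<subseteq> C"
proof -
  have "z \<notin> fixset s" if "s \<in> S - {t}" for s
    using z[OF that] halfspaces(3)[OF S_refls] that by blast
  moreover have "S - {t} \<subseteq> W"
    using S_refls by (auto simp: refls_def)
  ultimately obtain e where "e > 0" and e: "\<And>s. s \<in> S - {t} \<Longrightarrow> ball z e \<inter> fixset s = {}"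
    using exists_ball_avoiding_walls[of "S - {t}" z] unfolding fixset_def by blast
  have "ball z e \<subseteq> halfspace s C" if s: "s \<in> S - {t}" for s
  proof (rule components_maximal[OF halfspace_component(1)[OF S_refls] connected_ball_geodesic[OF geodesic]])
    show "ball z e \<subseteq> - fixset s"
      using e[OF s] by blast
    show "halfspace s C \<inter> ball z e \<noteq> {}"
      using z[OF s] \<open>e > 0\<close> by auto
  qed (use s in blast)
  then have "ball z e \<inter> halfspace t C \<subseteq> halfspace s C" if "s \<in> S" for s
    using that by (cases "s = t") auto
  then have "ball z e \<inter> halfspace t C \<subseteq> C"
    by (rule subset_chamberI)
  then show ?thesis
    using that \<open>e > 0\<close> by blast
qed

lemma separating_reflection_through_panel_eq:
  assumes t: "t \<in> S" and r: "r \<in> refls W" and sep: "separates r C (t ` C)"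
    and z: "t z = z" "r z = z" "z \<in> closure C"
    and "e > 0" and e: "ball z e \<inter> halfspace t C \<subseteq> C"
  shows "r = t"
proof -
  have t_refls: "t \<in> refls W"
    using S_refls[OF t] .
  then have "reflection t" "t \<in> W"
    by (simp_all add: refls_def)
  have "reflection r" "r \<in> W"
    using r by (simp_all add: refls_def)
  obtain A B where AB: "A \<in> components (- fixset r)" "B \<in> components (- fixset r)" "A \<noteq> B"
    "C \<subseteq> A" "t ` C \<subseteq> B"
    using sep unfolding separates_def by blast
  have "B = r ` A"
    using reflection_components(1)[OF \<open>reflection r\<close> AB(1)] AB(2,3) by blast
  have "A \<inter> B = {}"
    using components_nonoverlap[OF AB(1,2)] AB(3) by blast
  obtain p where "p \<in> C" "dist p z < e"
    using z(3) \<open>e > 0\<close> closure_approachable by blast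
  then have "p \<in> ball z e \<inter> halfspace t C"
    using halfspace_component(2)[OF t_refls] by (auto simp: dist_commute)
  then obtain x where x: "r x \<in> ball z e \<inter> halfspace t C" "x \<notin> fixset t"
    using exists_preimage_off_wall[OF reflection_isometry[OF \<open>reflection r\<close>] \<open>reflection t\<close>]
      open_Int[OF open_ball halfspaces(5)[OF t_refls]] by blast
  have "r x \<in> C"
    using x(1) e by blast
  then have "x \<in> B"
    using AB(4) \<open>B = r ` A\<close> reflection_involution[OF \<open>reflection r\<close>, of x] by (metis image_eqI subsetD)
  have x_ball: "x \<in> ball z e"
    using x(1) isometry_dist[OF reflection_isometry[OF \<open>reflection r\<close>], of z x] z(2) by simp
  have "x \<notin> halfspace t C"
    using x_ball e AB(4) \<open>x \<in> B\<close> \<open>A \<inter> B = {}\<close> by blast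
  then have "x \<in> t ` halfspace t C"
    using x(2) halfspaces(3)[OF t_refls] by blast
  then have "t x \<in> halfspace t C"
    using reflection_involution[OF \<open>reflection t\<close>] by auto
  moreover have "t x \<in> ball z e"
    using x_ball isometry_dist[OF reflection_isometry[OF \<open>reflection t\<close>], of z x] z(1) by simp
  ultimately have "(t \<circ> r) (r x) \<in> C"
    using e reflection_involution[OF \<open>reflection r\<close>] by auto
  then have "t \<circ> r = id"
    using W_chamber_point_eq_id[OF comp_W[OF \<open>t \<in> W\<close> \<open>r \<in> W\<close>] \<open>r x \<in> C\<close>] by blast
  then show "r = t"
    using reflection_involution[OF \<open>reflection t\<close>] by (metis comp_apply id_apply ext)
qed

lemma separating_reflection_eq:
  assumes t: "t \<in> S" and r: "r \<in> refls W" and sep: "separates r C (t ` C)"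
  shows "r = t"
proof -
  obtain z where z: "t z = z" "z \<in> closure C" "\<And>s. s \<in> S - {t} \<Longrightarrow> z \<in> halfspace s C"
    using panel_point[OF t] by blast
  obtain e where "e > 0" "ball z e \<inter> halfspace t C \<subseteq> C"
    using chamber_near_panel_point[OF t z(3)] by blast
  moreover have "r z = z"
    using fixed_point_on_separating_wall[OF geodesic _ _ sep z(1,2)] r S_refls[OF t]
    by (simp add: refls_def reflection_isometry)
  ultimately show ?thesis
    using separating_reflection_through_panel_eq[OF t r sep z(1) _ z(2)] by blast
qed

lemma wall_crossing_conj:
  assumes s: "s \<in> refls W" and t: "t \<in> S" and g: "g \<in> W"
    and before: "g ` C \<subseteq> halfspace s C" and after: "(g \<circ> t) ` C \<subseteq> s ` halfspace s C"
  shows "s \<circ> g = g \<circ> t"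
proof -
  have h: "isometry (inv g)"
    by (rule isometry_inv[OF isometry_W[OF g]])
  have "halfspace s C \<noteq> {}"
    using halfspace_component(2)[OF s] chamber_nonempty by blast
  then have "halfspace s C \<noteq> s ` halfspace s C"
    using halfspaces(2)[OF s] by auto
  moreover have "g ` t ` C \<subseteq> s ` halfspace s C"
    using after by (simp add: image_comp)
  ultimately have "separates s (g ` C) (g ` t ` C)"
    unfolding separates_def using halfspaces(1)[OF s] before
    by (intro exI[of _ "halfspace s C"] exI[of _ "s ` halfspace s C"]) simp
  then have "separates (inv g \<circ> s \<circ> inv (inv g)) (inv g ` g ` C) (inv g ` g ` t ` C)"
    by (rule separates_conj[OF h])
  moreover have "inv (inv g) = g"
    using isometry_bij[OF isometry_W[OF g]] by (simp add: inv_inv_eq)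
  moreover have "inv g ` g ` X = X" for X
    by (simp add: image_comp comp_def isometry_inv_f_f[OF isometry_W[OF g]])
  ultimately have "separates (inv g \<circ> s \<circ> g) C (t ` C)"
    by simp
  then have conj_eq: "inv g \<circ> s \<circ> g = t"
    by (rule separating_reflection_eq[OF t refls_conj[OF s g]])
  have "s \<circ> g = g \<circ> (inv g \<circ> s \<circ> g)"
    by (simp add: fun_eq_iff isometry_f_inv_f[OF isometry_W[OF g]])
  then show ?thesis
    unfolding conj_eq .
qed

lemma exchange_condition:
  assumes s: "s \<in> S" and ts: "set ts \<subseteq> S"
    and not_side: "\<not> compose_list ts ` C \<subseteq> halfspace s C"
  obtains ts' where "set ts' \<subseteq> S" "length ts' + 1 = length ts"
    "compose_list ts' = s \<circ> compose_list ts"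
proof -
  have s_refls: "s \<in> refls W"
    using S_refls[OF s] .
  define P where "P i \<longleftrightarrow> compose_list (take i ts) ` C \<subseteq> halfspace s C" for i
  have "P 0"
    unfolding P_def using halfspace_component(2)[OF s_refls] by (simp add: compose_list_Nil)
  moreover have "\<not> P (length ts)"
    unfolding P_def using not_side by simp
  ultimately obtain i where i: "i < length ts" "P i" "\<not> P (Suc i)"
    by (rule nat_crossing)
  define g where "g = compose_list (take i ts)"
  define t where "t = ts ! i"
  define rest where "rest = compose_list (drop (Suc i) ts)"
  have t_S: "t \<in> S"
    unfolding t_def using i(1) ts nth_mem by blast
  have g_W: "g \<in> W"
    unfolding g_def using ts set_take_subset by (metis compose_list_W order_trans)
  have take_Suc: "compose_list (take (Suc i) ts) = g \<circ> t"
    unfolding g_def t_def using i(1)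
    by (simp add: take_Suc_conv_app_nth compose_list_append compose_list_Cons compose_list_Nil)
  have "compose_list ts = g \<circ> t \<circ> rest"
    unfolding g_def t_def rest_def using i(1)
    by (metis id_take_nth_drop compose_list_append compose_list_Cons comp_assoc)
  moreover have "s \<circ> g = g \<circ> t"
  proof (rule wall_crossing_conj[OF s_refls t_S g_W])
    show "g ` C \<subseteq> halfspace s C"
      using i(2) unfolding P_def g_def .
    show "(g \<circ> t) ` C \<subseteq> s ` halfspace s C"
      using chamber_side[OF comp_W[OF g_W] s_refls] i(3) S_refls[OF t_S]
      unfolding P_def take_Suc by (auto simp: refls_def)
  qed
  moreover have "t \<circ> t = id"
    using S_refls[OF t_S] by (simp add: refls_def reflection_comp_self)
  ultimately have "s \<circ> compose_list ts = g \<circ> rest"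
    by (metis comp_assoc comp_id)
  moreover have "compose_list (take i ts @ drop (Suc i) ts) = g \<circ> rest"
    unfolding g_def rest_def by (rule compose_list_append)
  moreover have "set (take i ts @ drop (Suc i) ts) \<subseteq> S"
    using ts set_take_subset set_drop_subset by (metis set_append Un_subset_iff order_trans)
  moreover have "length (take i ts @ drop (Suc i) ts) + 1 = length ts"
    using i(1) by simp
  ultimately show ?thesis
    using that by metis
qed

lemma reduced_word_image_side:
  assumes S: "set (s # ss) \<subseteq> S"
    and reduced: "length (s # ss) = word_length S (compose_list (s # ss))"
  shows "compose_list (s # ss) ` C \<subseteq> s ` halfspace s C"
proof -
  have "compose_list ss ` C \<subseteq> halfspace s C"
  proof (rule ccontr)
    assume "\<not> compose_list ss ` C \<subseteq> halfspace s C"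
    then obtain ts' where ts': "set ts' \<subseteq> S" "length ts' + 1 = length ss"
      "compose_list ts' = compose_list (s # ss)"
      using exchange_condition[of s ss] S by (auto simp: compose_list_Cons)
    then have "word_length S (compose_list (s # ss)) \<le> length ts'"
      using word_length_le[OF ts'(1)] by simp
    then show False
      using reduced ts'(2) by simp
  qed
  then show ?thesis
    by (auto simp: compose_list_Cons)
qed

lemma reduced_word_letters_fix:
  assumes "set ss \<subseteq> S" "length ss = word_length S (compose_list ss)"
    and "x \<in> closure C" "x \<in> compose_list ss ` closure C" "t \<in> set ss"
  shows "t x = x"
  using assms
proof (induction ss)
  case Nil
  then show ?case
    by simp
next
  case (Cons s ss)
  have s_refls: "s \<in> refls W"
    using Cons.prems(1) S_refls by simp
  then have "reflection s"
    by (simp add: refls_def)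
  define w where "w = compose_list (s # ss)"
  have "w \<in> W"
    unfolding w_def using Cons.prems(1) by (rule compose_list_W)
  have "w ` C \<subseteq> closure (s ` halfspace s C)"
    using reduced_word_image_side[OF Cons.prems(1,2)] closure_subset unfolding w_def by blast
  then have "w ` closure C \<subseteq> closure (s ` halfspace s C)"
    by (rule image_closure_subset[OF isometry_continuous_on[OF isometry_W[OF \<open>w \<in> W\<close>]] closed_closure])
  moreover have "closure C \<subseteq> closure (halfspace s C)"
    using halfspace_component(2)[OF s_refls] by (rule closure_mono)
  ultimately have "x \<in> closure (halfspace s C) \<inter> closure (s ` halfspace s C)"
    using Cons.prems(3,4) unfolding w_def by blast
  then have sx: "s x = x"
    using closure_halfspaces_subset_wall[OF s_refls] by (auto simp: fixset_def)
  obtain y where y: "y \<in> closure C" "x = s (compose_list ss y)"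
    using Cons.prems(4) by (auto simp: compose_list_Cons)
  then have "x \<in> compose_list ss ` closure C"
    using sx reflection_involution[OF \<open>reflection s\<close>] by (metis image_eqI)
  then show ?case
    using Cons.IH reduced_word_tail[OF Cons.prems(1,2)] Cons.prems sx by auto
qed

lemma closure_chamber_inter_reduced_image:
  assumes "set ss \<subseteq> S" "length ss = word_length S (compose_list ss)"
  shows "closure C \<inter> compose_list ss ` closure C = closure C \<inter> (\<Inter>t\<in>set ss. fixset t \<inter> closure C)"
proof
  show "closure C \<inter> compose_list ss ` closure C \<subseteq> closure C \<inter> (\<Inter>t\<in>set ss. fixset t \<inter> closure C)"
    using reduced_word_letters_fix[OF assms] by (auto simp: fixset_def)
  show "closure C \<inter> (\<Inter>t\<in>set ss. fixset t \<inter> closure C) \<subseteq> closure C \<inter> compose_list ss ` closure C"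
  proof
    fix x assume x: "x \<in> closure C \<inter> (\<Inter>t\<in>set ss. fixset t \<inter> closure C)"
    have "t x = x" if "t \<in> set ss" for t
      using x that unfolding fixset_def by blast
    then have "compose_list ss x = x"
      by (rule compose_list_fixes)
    then show "x \<in> closure C \<inter> compose_list ss ` closure C"
      using x by (metis IntD1 IntI image_eqI)
  qed
qed

lemma fixset_inter_closure_chamber:
  assumes t: "t \<in> refls W"
  shows "fixset t \<inter> closure C = t ` closure C \<inter> closure C"
proof
  show "fixset t \<inter> closure C \<subseteq> t ` closure C \<inter> closure C"
  proof
    fix x assume x: "x \<in> fixset t \<inter> closure C"
    then have "t x \<in> t ` closure C"
      by blast
    then show "x \<in> t ` closure C \<inter> closure C"
      using x by (simp add: fixset_def)
  qed
  have "t ` C \<subseteq> closure (t ` halfspace t C)"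
    using halfspace_component(2)[OF t] closure_subset by blast
  moreover have "isometry t"
    using t by (simp add: refls_def reflection_isometry)
  ultimately have "t ` closure C \<subseteq> closure (t ` halfspace t C)"
    by (intro image_closure_subset isometry_continuous_on closed_closure)
  moreover have "closure C \<subseteq> closure (halfspace t C)"
    using halfspace_component(2)[OF t] by (rule closure_mono)
  ultimately show "t ` closure C \<inter> closure C \<subseteq> fixset t \<inter> closure C"
    using closure_halfspaces_subset_wall[OF t] by blast
qed

lemma Inter_gen_group_images:
  assumes T: "T \<subseteq> refls W"
  shows "(\<Inter>v\<in>gen_group T. v ` closure C) = closure C \<inter> (\<Inter>t\<in>T. fixset t \<inter> closure C)"
proof
  show "(\<Inter>v\<in>gen_group T. v ` closure C) \<subseteq> closure C \<inter> (\<Inter>t\<in>T. fixset t \<inter> closure C)"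
  proof
    fix x assume x: "x \<in> (\<Inter>v\<in>gen_group T. v ` closure C)"
    have "x \<in> id ` closure C"
      using x gen_group.gen_id by blast
    then have "x \<in> closure C"
      by simp
    moreover have "x \<in> fixset t \<inter> closure C" if "t \<in> T" for t
    proof -
      have "x \<in> t ` closure C"
        using x gen_group_generator[OF that] by blast
      then have "x \<in> t ` closure C \<inter> closure C"
        using \<open>x \<in> closure C\<close> by blast
      then show ?thesis
        using fixset_inter_closure_chamber[OF subsetD[OF T that]] by simp
    qed
    ultimately show "x \<in> closure C \<inter> (\<Inter>t\<in>T. fixset t \<inter> closure C)"
      by blast
  qed
  show "closure C \<inter> (\<Inter>t\<in>T. fixset t \<inter> closure C) \<subseteq> (\<Inter>v\<in>gen_group T. v ` closure C)"
  proof (intro subsetI INT_I)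
    fix x v assume x: "x \<in> closure C \<inter> (\<Inter>t\<in>T. fixset t \<inter> closure C)" and v: "v \<in> gen_group T"
    have fixes_x: "inj t \<and> t x = x" if "t \<in> T" for t
    proof
      show "inj t"
        using that T by (simp add: refls_def bij_is_inj isometry_bij reflection_isometry subset_iff)
      show "t x = x"
        using that x unfolding fixset_def by blast
    qed
    have "v x = x"
      by (rule gen_group_fixes[OF fixes_x v])
    then show "x \<in> v ` closure C"
      using x by (metis IntD1 image_eqI)
  qed
qed

end

theorem lemma3p1:
  fixes W :: "('a::metric_space \<Rightarrow> 'a) set" and C :: "'a set"
    and S :: "('a \<Rightarrow> 'a) set" and w :: "'a \<Rightarrow> 'a" and ss :: "('a \<Rightarrow> 'a) list"
  assumes "CAT0 TYPE('a)"
    and "cocompact_discrete_refl_group W C"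
    and "minimal_gens W C S"
    and "w \<in> W"
    and "set ss \<subseteq> S" and "compose_list ss = w" and "length ss = word_length S w"
  shows "closure C \<inter> w ` closure C = closure C \<inter> (\<Inter>t\<in>set ss. fixset t \<inter> closure C)
       \<and> closure C \<inter> (\<Inter>t\<in>set ss. fixset t \<inter> closure C)
           = closure C \<inter> (\<Inter>t\<in>set ss. t ` closure C \<inter> closure C)
       \<and> closure C \<inter> (\<Inter>t\<in>set ss. t ` closure C \<inter> closure C)
           = (\<Inter>v\<in>gen_group (set ss). v ` closure C)"
proof -
  interpret discrete_reflection_group W C S
    using assms(1-3) unfolding CAT0_def by unfold_locales blast+
  have T: "set ss \<subseteq> refls W"
    using assms(5) S_subset_refls by blast
  have faces: "(\<Inter>t\<in>set ss. fixset t \<inter> closure C) = (\<Inter>t\<in>set ss. t ` closure C \<inter> closure C)"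
    using fixset_inter_closure_chamber T by blast
  show ?thesis
    using closure_chamber_inter_reduced_image[OF assms(5)] Inter_gen_group_images[OF T] faces assms(6,7)
    by simp
qed

end
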